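(* Under the standing assumptions, writing (R1) for $\mathscr{R}(A^*AB)=\mathscr{R}(B)$ and (R2) for $\mathscr{R}(CC^*B^* )=\mathscr{R}(B^* )$, the following hold. (49) $\{M^{(1,3,4)}\}\subseteq\{C^{-1}B^{(1)}A^{-1}\}$; and $\{M^{(1,3,4)}\}\supseteq\{C^{-1}B^{(1)}A^{-1}\}\Leftrightarrow\{M^{(1,3,4)}\}=\{C^{-1}B^{(1)}A^{-1}\}\Leftrightarrow B=0$ or $r(B)=m=n$. (50) $\{M^{(1,3,4)}\}\cap\{C^{-1}B^{(1,2)}A^{-1}\}\neq\emptyset$; $\{M^{(1,3,4)}\}\supseteq\{C^{-1}B^{(1,2)}A^{-1}\}\Leftrightarrow B=0$ or $r(B)=m=n$; $\{M^{(1,3,4)}\}\subseteq\{C^{-1}B^{(1,2)}A^{-1}\}\Leftrightarrow r(B)=m$ or $r(B)=n$; $\{M^{(1,3,4)}\}=\{C^{-1}B^{(1,2)}A^{-1}\}\Leftrightarrow r(B)=m=n$. (51) $\{M^{(1,3,4)}\}\cap\{C^{-1}B^{(1,3)}A^{-1}\}\neq\emptyset\Leftrightarrow\{M^{(1,3,4)}\}\subseteq\{C^{-1}B^{(1,3)}A^{-1}\}\Leftrightarrow$ (R1); and $\{M^{(1,3,4)}\}\supseteq\{C^{-1}B^{(1,3)}A^{-1}\}\Leftrightarrow\{M^{(1,3,4)}\}=\{C^{-1}B^{(1,3)}A^{-1}\}\Leftrightarrow B=0$ or ($r(B)=n$ and (R1)). (52) $\{M^{(1,3,4)}\}\cap\{C^{-1}B^{(1,4)}A^{-1}\}\neq\emptyset\Leftrightarrow\{M^{(1,3,4)}\}\subseteq\{C^{-1}B^{(1,4)}A^{-1}\}\Leftrightarrow$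 (R2); and $\{M^{(1,3,4)}\}\supseteq\{C^{-1}B^{(1,4)}A^{-1}\}\Leftrightarrow\{M^{(1,3,4)}\}=\{C^{-1}B^{(1,4)}A^{-1}\}\Leftrightarrow B=0$ or ($r(B)=m$ and (R2)). (53) $\{M^{(1,3,4)}\}\cap\{C^{-1}B^{(1,2,3)}A^{-1}\}\neq\emptyset\Leftrightarrow$ (R1); $\{M^{(1,3,4)}\}\supseteq\{C^{-1}B^{(1,2,3)}A^{-1}\}\Leftrightarrow B=0$ or ($r(B)=n$ and (R1)); $\{M^{(1,3,4)}\}\subseteq\{C^{-1}B^{(1,2,3)}A^{-1}\}\Leftrightarrow$ (R1) and $r(B)=\min\{m,n\}$; $\{M^{(1,3,4)}\}=\{C^{-1}B^{(1,2,3)}A^{-1}\}\Leftrightarrow r(B)=n$ and (R1). (54) $\{M^{(1,3,4)}\}\cap\{C^{-1}B^{(1,2,4)}A^{-1}\}\neq\emptyset\Leftrightarrow$ (R2); $\{M^{(1,3,4)}\}\supseteq\{C^{-1}B^{(1,2,4)}A^{-1}\}\Leftrightarrow B=0$ or ($r(B)=m$ and (R2)); $\{M^{(1,3,4)}\}\subseteq\{C^{-1}B^{(1,2,4)}A^{-1}\}\Leftrightarrow$ (R2) and $r(B)=\min\{m,n\}$; $\{M^{(1,3,4)}\}=\{C^{-1}B^{(1,2,4)}A^{-1}\}\Leftrightarrow r(B)=m$ and (R2). (55) $\{M^{(1,3,4)}\}\cap\{C^{-1}B^{(1,3,4)}A^{-1}\}\neq\emptyset\Leftrightarrow\{M^{(1,3,4)}\}=\{C^{-1}B^{(1,3,4)}A^{-1}\}\Leftrightarrow$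 (R1) and (R2). (56) $C^{-1}B^\dagger A^{-1}\in\{M^{(1,3,4)}\}\Leftrightarrow$ (R1) and (R2).
   Context: Standing assumptions: $m,n\ge1$; $A\in\mathbb{C}^{m\times m}$ and $C\in\mathbb{C}^{n\times n}$ are nonsingular; $B\in\mathbb{C}^{m\times n}$; $M=ABC$. For a complex matrix $X$, $X^*$ is its conjugate transpose, $r(X)$ its rank and $\mathscr{R}(X)$ its column space. For $X\in\mathbb{C}^{p\times q}$, a matrix $G\in\mathbb{C}^{q\times p}$ is called an $\{i,\ldots,j\}$-generalized inverse of $X$ (written $X^{(i,\ldots,j)}$) if it satisfies the equations numbered $i,\ldots,j$ among the four Penrose equations (i) $XGX=X$, (ii) $GXG=G$, (iii) $(XG)^*=XG$, (iv) $(GX)^*=GX$; $\{X^{(i,\ldots,j)}\}$ denotes the set of all such $G$. The Moore–Penrose inverse $X^\dagger$ is the unique matrix satisfying all four equations. For a type $(k,\ldots,l)$, $\{C^{-1}B^{(k,\ldots,l)}A^{-1}\}:=\{C^{-1}GA^{-1}: G\in\{B^{(k,\ldots,l)}\}\}$. *)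

theory Defs
  imports "HOL-Analysis.Analysis"
begin

text \<open>Matrices: an m x n complex matrix is \<open>complex^'n^'m\<close>, with m = CARD('m), n = CARD('n).\<close>

definition adj :: "complex^'n^'m \<Rightarrow> complex^'m^'n" where
  "adj X = (\<chi> i j. cnj (X $ j $ i))"

definition colspace :: "complex^'n^'m \<Rightarrow> (complex^'m) set" where
  "colspace X = range (\<lambda>x. X *v x)"

definition ginv :: "nat set \<Rightarrow> complex^'n^'m \<Rightarrow> (complex^'m^'n) set" where
  "ginv S X = {G. (1 \<in> S \<longrightarrow> X ** G ** X = X) \<and>
                  (2 \<in> S \<longrightarrow> G ** X ** G = G) \<and>
                  (3 \<in> S \<longrightarrow> adj (X ** G) = X ** G) \<and>
                  (4 \<in> S \<longrightarrow> adj (G ** X) = G ** X)}"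

definition mpinv :: "complex^'n^'m \<Rightarrow> complex^'m^'n" where
  "mpinv X = (THE G. G \<in> ginv {1,2,3,4} X)"

definition tset :: "complex^'m^'m \<Rightarrow> complex^'n^'m \<Rightarrow> complex^'n^'n \<Rightarrow> nat set \<Rightarrow> (complex^'m^'n) set" where
  "tset A B C S = (\<lambda>G. matrix_inv C ** G ** matrix_inv A) ` ginv S B"

end

theory Submission
  imports Defs
begin

text \<open>
  Put \<open>M = ABC\<close>, \<open>P = MM\<^sup>\<dagger>\<close> and \<open>Q = M\<^sup>\<dagger>M\<close>. For a \<open>(1,3)\<close>-inverse \<open>G\<close> of \<open>M\<close> the
  Hermitian idempotent \<open>MG\<close> is forced to be \<open>P\<close>, and dually for \<open>(1,4)\<close>-inverses, so
  \<open>G \<in> {M\<^sup>(\<^sup>1\<^sup>,\<^sup>3\<^sup>,\<^sup>4\<^sup>)}\<close> iff \<open>MG = P\<close> and \<open>GM = Q\<close>. Writing \<open>G = C\<^sup>-\<^sup>1NA\<^sup>-\<^sup>1\<close>, the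
  Penrose equations of \<open>N\<close> for \<open>B\<close> become \<open>MGM = M\<close>, \<open>GMG = G\<close>, \<open>MG = P\<^sub>B\<close>, \<open>GM = Q\<^sub>B\<close>
  with the oblique projectors \<open>P\<^sub>B = A BB\<^sup>\<dagger> A\<^sup>-\<^sup>1\<close> (same range as \<open>P\<close>) and
  \<open>Q\<^sub>B = C\<^sup>-\<^sup>1 B\<^sup>\<dagger>B C\<close> (same kernel as \<open>Q\<close>). Condition (R1) says exactly \<open>P\<^sub>B = P\<close>,
  (R2) says \<open>Q\<^sub>B = Q\<close>, and \<open>r(B) = m\<close>, resp. \<open>r(B) = n\<close>, says \<open>P = I\<close>, resp. \<open>Q = I\<close>.

  Every relation then reduces to three criteria. \<open>M\<^sup>\<dagger>\<close> decides non-empty intersections.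
  \<open>C\<^sup>-\<^sup>1B\<^sup>\<dagger>A\<^sup>-\<^sup>1\<close> lies in every \<open>{C\<^sup>-\<^sup>1B\<^sup>(\<^sup>S\<^sup>)A\<^sup>-\<^sup>1}\<close>, so an inclusion into \<open>{M\<^sup>(\<^sup>1\<^sup>,\<^sup>3\<^sup>,\<^sup>4\<^sup>)}\<close>
  forces \<open>P\<^sub>B = P\<close> and \<open>Q\<^sub>B = Q\<close>. Finally, for arbitrary \<open>W\<close> the \<open>{1,2}\<close>-inverses
  \<open>M\<^sup>\<dagger> + (I - Q)WP\<close> and \<open>M\<^sup>\<dagger> + QW(I - P)\<close> and the \<open>{1,3,4}\<close>-inverses
  \<open>M\<^sup>\<dagger> + (I - Q)W(I - P)\<close> show that the remaining inclusions force \<open>Q = I\<close>, \<open>P = I\<close>, or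
  \<open>P = I \<or> Q = I\<close>, respectively, because \<open>XWY = 0\<close> for all \<open>W\<close> implies \<open>X = 0\<close> or \<open>Y = 0\<close>.
\<close>

section \<open>Adjoints and the Moore--Penrose inverse\<close>

lemma adj_nth [simp]: "adj X $ i $ j = cnj (X $ j $ i)"
  by (simp add: adj_def)

lemma adj_adj [simp]: "adj (adj X) = X"
  by (simp add: vec_eq_iff)

lemma adj_mult: "adj (X ** Y) = adj Y ** adj X"
  by (simp add: vec_eq_iff matrix_matrix_mult_def mult.commute)

lemma adj_mat [simp]: "adj (mat k) = mat (cnj k)"
  by (simp add: vec_eq_iff mat_def)

lemma matrix_diff_ldistrib: "(X::'a::ring_1^'n^'m) ** (Y - Z) = X ** Y - X ** Z"
  by (simp add: vec_eq_iff matrix_matrix_mult_def sum_subtractf right_diff_distrib)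

lemma matrix_diff_rdistrib: "((Y::'a::ring_1^'n^'m) - Z) ** X = Y ** X - Z ** X"
  by (simp add: vec_eq_iff matrix_matrix_mult_def sum_subtractf left_diff_distrib)

lemma matrix_add_rdistrib: "((Y::'a::semiring_1^'n^'m) + Z) ** X = Y ** X + Z ** X"
  by (simp add: vec_eq_iff matrix_matrix_mult_def sum.distrib distrib_right)

lemma mat_1_neq_0: "(mat 1 :: 'a::zero_neq_one^'n^'n) \<noteq> 0"
  by (simp add: vec_eq_iff mat_def)

lemma all_products_eq_0:
  fixes X :: "'a::{semiring_1,semiring_no_zero_divisors}^'q^'p" and Y :: "'a^'s^'r"
  assumes "\<And>W. X ** W ** Y = 0"
  shows "X = 0 \<or> Y = 0"
proof (rule ccontr)
  assume "\<not> (X = 0 \<or> Y = 0)"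
  then obtain i j k l where x: "X $ i $ j \<noteq> 0" and y: "Y $ k $ l \<noteq> 0"
    by (metis vec_eq_iff zero_index)
  define W :: "'a^'r^'q" where "W = (\<chi> a b. if a = j \<and> b = k then 1 else 0)"
  have "(X ** W) $ i $ b = (if b = k then X $ i $ j else 0)" for b
    by (simp add: W_def matrix_matrix_mult_def if_distrib if_distribR sum.delta' cong: if_cong)
  then have XW: "(X ** W) $ i $ b * Y $ b $ l = (if b = k then X $ i $ j * Y $ k $ l else 0)" for b
    by simp
  have "(X ** W ** Y) $ i $ l = (\<Sum>b\<in>UNIV. (X ** W) $ i $ b * Y $ b $ l)"
    by (simp only: matrix_matrix_mult_def[of "X ** W" Y] vec_lambda_beta)
  also have "\<dots> = X $ i $ j * Y $ k $ l"
    by (simp add: XW)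
  finally show False
    using assms[of W] x y by simp
qed

lemma adj_mult_self_eq_0D:
  fixes Z :: "complex^'n^'m"
  assumes "adj Z ** Z = 0"
  shows "Z = 0"
proof -
  have "Z $ i $ j = 0" for i j
  proof -
    have "complex_of_real (\<Sum>k\<in>UNIV. (cmod (Z $ k $ j))\<^sup>2) = (adj Z ** Z) $ j $ j"
      by (simp add: matrix_matrix_mult_def complex_mult_cnj cmod_power2 mult.commute)
    also have "\<dots> = 0"
      using assms by simp
    finally have "(\<Sum>k\<in>UNIV. (cmod (Z $ k $ j))\<^sup>2) = 0"
      by (simp only: of_real_eq_0_iff)
    then show ?thesis
      by (simp add: sum_nonneg_eq_0_iff)
  qed
  then show ?thesis
    by (simp add: vec_eq_iff)
qed

lemma adj_mult_self_cancel_left: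
  fixes X :: "complex^'n^'m" and Y Z :: "complex^'p^'n"
  assumes "adj X ** X ** Y = adj X ** X ** Z"
  shows "X ** Y = X ** Z"
proof -
  have "adj (X ** (Y - Z)) ** (X ** (Y - Z)) = adj (Y - Z) ** (adj X ** X ** (Y - Z))"
    by (simp add: adj_mult matrix_mul_assoc)
  also have "\<dots> = 0"
    using assms by (simp add: matrix_diff_ldistrib)
  finally show ?thesis
    using adj_mult_self_eq_0D by (fastforce simp: matrix_diff_ldistrib)
qed

lemma ginv_1_exists:
  fixes X :: "'a::field^'n^'m"
  shows "\<exists>G. X ** G ** X = X"
proof -
  obtain g where g: "Vector_Spaces.linear (*s) (*s) g" "\<forall>v\<in>range ((*v) X). X *v g v = v"
    using vec.linear_exists_right_inverse_on[OF matrix_vector_mul_linear_gen vec.subspace_UNIV]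
    by blast
  have "(X ** matrix g ** X) *v x = X *v x" for x
    by (simp add: matrix_vector_mul_assoc[symmetric] matrix_works[OF g(1)] g(2))
  then have "X ** matrix g ** X = X"
    by (simp add: matrix_eq)
  then show ?thesis ..
qed

text \<open>The classical construction \<open>G = (X\<^sup>* X)\<^sup>- X\<^sup>*\<close>.\<close>

lemma ginv_13_exists:
  fixes X :: "complex^'n^'m"
  shows "\<exists>G. X ** G ** X = X \<and> adj (X ** G) = X ** G"
proof -
  obtain G where G: "adj X ** X ** G ** (adj X ** X) = adj X ** X"
    using ginv_1_exists by blast
  have G': "adj X ** X ** adj G ** (adj X ** X) = adj X ** X"
    using arg_cong[OF G, of adj] by (simp add: adj_mult matrix_mul_assoc)
  have "X ** (G ** adj X ** X) = X ** mat 1"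
    by (rule adj_mult_self_cancel_left) (use G in \<open>simp add: matrix_mul_assoc\<close>)
  then have e1: "X ** (G ** adj X) ** X = X"
    by (simp add: matrix_mul_assoc)
  have "X ** (adj G ** adj X ** X) = X ** mat 1"
    by (rule adj_mult_self_cancel_left) (use G' in \<open>simp add: matrix_mul_assoc\<close>)
  then have e2: "X ** adj G ** adj X ** X = X"
    by (simp add: matrix_mul_assoc)
  have e2': "adj X ** X ** G ** adj X = adj X"
    using arg_cong[OF e2, of adj] by (simp add: adj_mult matrix_mul_assoc)
  have "adj (X ** (G ** adj X)) = X ** adj G ** adj X"
    by (simp add: adj_mult matrix_mul_assoc)
  also have "\<dots> = X ** adj G ** (adj X ** X ** G ** adj X)"
    by (simp only: e2')
  also have "\<dots> = X ** (G ** adj X)"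
    by (simp add: e2 matrix_mul_assoc)
  finally show ?thesis
    using e1 by blast
qed

text \<open>Urquhart's formula: \<open>X\<^sup>(\<^sup>1\<^sup>,\<^sup>4\<^sup>) X X\<^sup>(\<^sup>1\<^sup>,\<^sup>3\<^sup>)\<close> satisfies all four Penrose equations.\<close>

lemma ginv_1234_exists:
  fixes X :: "complex^'n^'m"
  shows "\<exists>G. G \<in> ginv {1,2,3,4} X"
proof -
  obtain G3 where G3: "X ** G3 ** X = X" "adj (X ** G3) = X ** G3"
    using ginv_13_exists by blast
  obtain Y where Y: "adj X ** Y ** adj X = adj X" "adj (adj X ** Y) = adj X ** Y"
    using ginv_13_exists by blast
  define G4 where "G4 = adj Y"
  have G4: "X ** G4 ** X = X" "adj (G4 ** X) = G4 ** X"
    using arg_cong[OF Y(1), of adj] Y(2) by (auto simp: G4_def adj_mult matrix_mul_assoc)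
  define G where "G = G4 ** X ** G3"
  have XG: "X ** G = X ** G3"
    unfolding G_def by (metis G4(1) matrix_mul_assoc)
  have GX: "G ** X = G4 ** X"
    unfolding G_def by (metis G3(1) matrix_mul_assoc)
  have "G ** X ** G = G4 ** (X ** G)"
    by (simp add: GX flip: matrix_mul_assoc)
  also have "\<dots> = G"
    unfolding XG by (simp add: G_def matrix_mul_assoc)
  finally have "G ** X ** G = G" .
  then have "G \<in> ginv {1,2,3,4} X"
    using G3 G4 XG GX by (simp add: ginv_def)
  then show ?thesis ..
qed

lemma ginv_1234_unique:
  fixes X :: "complex^'n^'m"
  assumes "G \<in> ginv {1,2,3,4} X" "H \<in> ginv {1,2,3,4} X"
  shows "G = H"
proof -
  have g: "X ** G ** X = X" "G ** X ** G = G" "adj (X ** G) = X ** G" "adj (G ** X) = G ** X"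
    and h: "X ** H ** X = X" "H ** X ** H = H" "adj (X ** H) = X ** H" "adj (H ** X) = H ** X"
    using assms by (auto simp: ginv_def)
  have "X ** G = adj (X ** H ** X ** G)"
    using g(3) h(1) by simp
  also have "\<dots> = X ** G ** X ** H"
    using g(3) h(3) by (simp add: adj_mult matrix_mul_assoc)
  finally have XG: "X ** G = X ** H"
    using g(1) by simp
  have "G ** X = adj (G ** X ** H ** X)"
    using g(4) h(1) by (metis matrix_mul_assoc)
  also have "\<dots> = H ** X ** G ** X"
    using g(4) h(4) by (simp add: adj_mult matrix_mul_assoc)
  finally have GX: "G ** X = H ** X"
    using g(1) by (metis matrix_mul_assoc)
  have "G = G ** (X ** G)"
    using g(2) by (simp add: matrix_mul_assoc)
  also have "\<dots> = H ** X ** H"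
    by (simp add: XG GX matrix_mul_assoc)
  finally show ?thesis
    using h(2) by simp
qed

lemma mpinv_ginv: "mpinv X \<in> ginv {1,2,3,4} X"
proof -
  obtain G where G: "G \<in> ginv {1,2,3,4} X"
    using ginv_1234_exists by blast
  then have "mpinv X = G"
    unfolding mpinv_def by (rule the_equality) (use G ginv_1234_unique in blast)
  then show ?thesis
    using G by simp
qed

lemma mpinv_penrose:
  "X ** mpinv X ** X = X" "mpinv X ** X ** mpinv X = mpinv X"
  "adj (X ** mpinv X) = X ** mpinv X" "adj (mpinv X ** X) = mpinv X ** X"
  using mpinv_ginv[of X] by (auto simp: ginv_def)

lemma mpinv_adj: "mpinv (adj X) = adj (mpinv X)"
proof -
  have "adj (mpinv X) \<in> ginv {1,2,3,4} (adj X) \<longleftrightarrow>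
      adj (X ** mpinv X ** X) = adj X \<and> adj (mpinv X ** X ** mpinv X) = adj (mpinv X) \<and>
      adj (adj (mpinv X ** X)) = adj (mpinv X ** X) \<and> adj (adj (X ** mpinv X)) = adj (X ** mpinv X)"
    by (simp add: ginv_def adj_mult matrix_mul_assoc)
  also have "\<dots>"
    by (simp only: mpinv_penrose adj_adj simp_thms)
  finally show ?thesis
    using ginv_1234_unique mpinv_ginv by blast
qed

lemma ginv_13_iff: "G \<in> ginv {1,3} X \<longleftrightarrow> X ** G = X ** mpinv X"
proof
  assume "G \<in> ginv {1,3} X"
  then have G: "X ** G ** X = X" "adj (X ** G) = X ** G"
    by (auto simp: ginv_def)
  have "X ** G = adj (X ** mpinv X ** (X ** G))"
    by (simp add: matrix_mul_assoc mpinv_penrose(1) G(2))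
  also have "\<dots> = X ** G ** (X ** mpinv X)"
    by (subst adj_mult) (simp only: G(2) mpinv_penrose(3))
  also have "\<dots> = X ** mpinv X"
    by (simp add: matrix_mul_assoc G(1))
  finally show "X ** G = X ** mpinv X" .
qed (simp add: ginv_def mpinv_penrose)

lemma ginv_14_iff: "G \<in> ginv {1,4} X \<longleftrightarrow> G ** X = mpinv X ** X"
proof
  assume "G \<in> ginv {1,4} X"
  then have G: "X ** G ** X = X" "adj (G ** X) = G ** X"
    by (auto simp: ginv_def)
  have "G ** X ** (mpinv X ** X) = G ** (X ** mpinv X ** X)"
    by (simp add: matrix_mul_assoc)
  then have "G ** X = adj (G ** X ** (mpinv X ** X))"
    by (simp add: mpinv_penrose(1) G(2))
  also have "\<dots> = mpinv X ** X ** (G ** X)"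
    by (subst adj_mult) (simp only: G(2) mpinv_penrose(4))
  also have "\<dots> = mpinv X ** (X ** G ** X)"
    by (simp add: matrix_mul_assoc)
  finally show "G ** X = mpinv X ** X"
    by (simp add: G(1))
next
  assume "G ** X = mpinv X ** X"
  moreover have "X ** (mpinv X ** X) = X"
    by (simp add: matrix_mul_assoc mpinv_penrose(1))
  ultimately show "G \<in> ginv {1,4} X"
    by (simp add: ginv_def mpinv_penrose matrix_mul_assoc[symmetric])
qed

lemma mem_ginv_iff:
  assumes "1 \<in> S"
  shows "G \<in> ginv S X \<longleftrightarrow> X ** G ** X = X \<and> (2 \<in> S \<longrightarrow> G ** X ** G = G)
           \<and> (3 \<in> S \<longrightarrow> X ** G = X ** mpinv X) \<and> (4 \<in> S \<longrightarrow> G ** X = mpinv X ** X)"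
proof -
  have "X ** G ** X = X \<and> adj (X ** G) = X ** G \<longleftrightarrow> X ** G = X ** mpinv X"
    using ginv_13_iff[of G X] by (simp add: ginv_def)
  moreover have "X ** G ** X = X \<and> adj (G ** X) = G ** X \<longleftrightarrow> G ** X = mpinv X ** X"
    using ginv_14_iff[of G X] by (simp add: ginv_def)
  ultimately show ?thesis
    using assms unfolding ginv_def mem_Collect_eq by blast
qed

lemma ginv_134_iff: "G \<in> ginv {1,3,4} X \<longleftrightarrow> X ** G = X ** mpinv X \<and> G ** X = mpinv X ** X"
  by (auto simp: mem_ginv_iff mpinv_penrose(1))

section \<open>Rank via one-sided inverses\<close>

lemma rows_eq_range: "rows X = range (\<lambda>i. row i X)"
  by (auto simp: rows_def)

lemma rank_le_card_cols: "rank (X::'a::field^'n^'m) \<le> CARD('n)"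
  unfolding row_rank_def_gen by (rule dim_subset_UNIV_cart_gen)

lemma rank_le_card_rows: "rank (X::'a::field^'n^'m) \<le> CARD('m)"
proof -
  have "vec.dim (rows X) \<le> card (rows X)"
    by (rule vec.dim_le_card) (auto simp: rows_eq_range intro: vec.span_base)
  also have "\<dots> \<le> CARD('m)"
    unfolding rows_eq_range by (rule card_image_le) simp
  finally show ?thesis
    unfolding row_rank_def_gen .
qed

lemma rank_eq_card_cols_iff: "rank (X::'a::field^'n^'m) = CARD('n) \<longleftrightarrow> (\<exists>L. L ** X = mat 1)"
proof -
  have "vec.dim (rows X) = vec.dim (UNIV :: ('a^'n) set) \<longleftrightarrow> vec.span (rows X) = UNIV"
  proof
    assume "vec.dim (rows X) = vec.dim (UNIV :: ('a^'n) set)"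
    then have "vec.span (rows X) = vec.span UNIV"
      by (intro vec.dim_eq_span) auto
    then show "vec.span (rows X) = UNIV"
      by simp
  qed (metis vec.dim_span vec.dim_UNIV)
  then show ?thesis
    unfolding matrix_left_invertible_span_rows_gen row_rank_def_gen vec_dim_card .
qed

lemma sum_rows_reindex:
  assumes "inj (\<lambda>i. row i X)"
  shows "(\<Sum>v\<in>rows X. u v *s v) = (\<Sum>i\<in>UNIV. u (row i X) *s row i X)"
  unfolding rows_eq_range by (simp add: sum.reindex[OF assms])

lemma right_invertible_imp_rank_eq_card_rows:
  fixes X :: "'a::field^'n^'m"
  assumes R: "X ** R = mat 1"
  shows "rank X = CARD('m)"
proof -
  have inj: "inj (\<lambda>i. row i X)"
  proof (rule injI)
    fix i j
    assume "row i X = row j X"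
    then have "(X ** R) $ i $ i = (X ** R) $ j $ i"
      by (simp add: row_def vec_eq_iff matrix_matrix_mult_def)
    then show "i = j"
      using R by (simp add: mat_def split: if_splits)
  qed
  have "vec.independent (rows X)"
  proof
    assume "vec.dependent (rows X)"
    then obtain u where u: "\<exists>v\<in>rows X. u v \<noteq> 0" "(\<Sum>v\<in>rows X. u v *s v) = 0"
      using vec.dependent_finite[of "rows X"] by (auto simp: rows_eq_range)
    have fam: "\<forall>c. (\<Sum>i\<in>UNIV. c i *s row i X) = 0 \<longrightarrow> (\<forall>i. c i = 0)"
      using R matrix_right_invertible_independent_rows[of X] by blast
    have "(\<Sum>i\<in>UNIV. u (row i X) *s row i X) = 0"
      using u(2) by (simp add: sum_rows_reindex[OF inj])
    then have "u (row i X) = 0" for i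
      by (rule fam[rule_format])
    then show False
      using u(1) by (auto simp: rows_eq_range)
  qed
  then have "vec.dim (rows X) = card (rows X)"
    by (rule vec.dim_eq_card_independent)
  also have "\<dots> = CARD('m)"
    unfolding rows_eq_range using card_image[OF inj] by simp
  finally show ?thesis
    unfolding row_rank_def_gen .
qed

lemma rank_eq_card_rows_imp_right_invertible:
  fixes X :: "'a::field^'n^'m"
  assumes rank: "rank X = CARD('m)"
  shows "\<exists>R. X ** R = mat 1"
proof -
  have fin: "finite (rows X)"
    by (simp add: rows_eq_range)
  have "vec.dim (rows X) \<le> card (rows X)"
    by (rule vec.dim_le_card) (auto simp: rows_eq_range intro: vec.span_base)
  moreover have "card (rows X) \<le> CARD('m)"
    unfolding rows_eq_range by (rule card_image_le) simp
  ultimately have card: "card (rows X) = vec.dim (rows X)" "card (rows X) = CARD('m)"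
    using rank unfolding row_rank_def_gen by simp_all
  have ind: "vec.independent (rows X)"
    using vec.card_eq_dim[of "rows X" "rows X"] card(1) fin vec.span_superset by blast
  have inj: "inj (\<lambda>i. row i X)"
    using card(2) unfolding rows_eq_range by (intro eq_card_imp_inj_on) auto
  have "\<forall>c. (\<Sum>i\<in>UNIV. c i *s row i X) = 0 \<longrightarrow> (\<forall>i. c i = 0)"
  proof (intro allI impI)
    fix c :: "'m \<Rightarrow> 'a" and i
    assume sum: "(\<Sum>i\<in>UNIV. c i *s row i X) = 0"
    define u where "u v = c (the_inv (\<lambda>i. row i X) v)" for v
    have u: "u (row j X) = c j" for j
      unfolding u_def by (simp add: the_inv_f_f[OF inj])
    have "(\<Sum>v\<in>rows X. u v *s v) = 0"
      using sum by (simp add: sum_rows_reindex[OF inj] u)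
    then have "\<forall>v\<in>rows X. u v = 0"
      using ind unfolding vec.dependent_finite[OF fin] by auto
    then show "c i = 0"
      by (simp add: rows_eq_range u)
  qed
  then show ?thesis
    by (simp only: matrix_right_invertible_independent_rows)
qed

lemma rank_eq_card_rows_iff: "rank (X::'a::field^'n^'m) = CARD('m) \<longleftrightarrow> (\<exists>R. X ** R = mat 1)"
  using right_invertible_imp_rank_eq_card_rows rank_eq_card_rows_imp_right_invertible by blast

lemma mpinv_right_inverse_iff: "X ** mpinv X = mat 1 \<longleftrightarrow> (\<exists>R. X ** R = mat 1)"
proof
  assume "\<exists>R. X ** R = mat 1"
  then obtain R where R: "X ** R = mat 1" ..
  have "X ** mpinv X = X ** mpinv X ** (X ** R)"
    using R by simp
  also have "\<dots> = X ** R"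
    by (simp add: matrix_mul_assoc mpinv_penrose(1))
  finally show "X ** mpinv X = mat 1"
    using R by simp
qed blast

lemma mpinv_left_inverse_iff: "mpinv X ** X = mat 1 \<longleftrightarrow> (\<exists>L. L ** X = mat 1)"
proof
  assume "\<exists>L. L ** X = mat 1"
  then obtain L where L: "L ** X = mat 1" ..
  have "mpinv X ** X = L ** X ** (mpinv X ** X)"
    using L by simp
  also have "\<dots> = L ** (X ** mpinv X ** X)"
    by (simp add: matrix_mul_assoc)
  also have "\<dots> = mat 1"
    using L by (simp add: mpinv_penrose(1))
  finally show "mpinv X ** X = mat 1" .
qed blast

section \<open>Hermitian matrices commuting with orthogonal projectors\<close>

lemma adj_similar_eq_iff_commute:
  fixes S Si E :: "complex^'m^'m"
  assumes S: "S ** Si = mat 1" "Si ** S = mat 1" and E: "adj E = E"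
  shows "adj (S ** E ** Si) = S ** E ** Si \<longleftrightarrow> adj S ** S ** E = E ** (adj S ** S)"
proof -
  have adj_S: "adj Si ** adj S = mat 1" "adj S ** adj Si = mat 1"
    using arg_cong[OF S(1), of adj] arg_cong[OF S(2), of adj] by (simp_all add: adj_mult)
  have adj_SES: "adj (S ** E ** Si) = adj Si ** E ** adj S"
    using E by (simp add: adj_mult matrix_mul_assoc)
  show ?thesis
  proof
    assume h: "adj (S ** E ** Si) = S ** E ** Si"
    have "E ** (adj S ** S) = adj S ** (adj Si ** E ** adj S) ** S"
      using adj_S by (simp add: matrix_mul_assoc)
    also have "\<dots> = adj S ** S ** E ** (Si ** S)"
      using h adj_SES by (simp add: matrix_mul_assoc)
    finally show "adj S ** S ** E = E ** (adj S ** S)"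
      using S by simp
  next
    assume h: "adj S ** S ** E = E ** (adj S ** S)"
    have "adj (S ** E ** Si) = adj Si ** (E ** (adj S ** S)) ** Si"
      using adj_SES S by (simp add: matrix_mul_assoc[symmetric])
    also have "\<dots> = adj Si ** (adj S ** S ** E) ** Si"
      by (simp only: h)
    finally show "adj (S ** E ** Si) = S ** E ** Si"
      using adj_S by (simp add: matrix_mul_assoc)
  qed
qed

lemma commute_inverse_iff:
  fixes K Ki E :: "'a::semiring_1^'m^'m"
  assumes K: "K ** Ki = mat 1" "Ki ** K = mat 1"
  shows "K ** E = E ** K \<longleftrightarrow> Ki ** E = E ** Ki"
proof -
  have commute_inverse: "Y ** E = E ** Y \<Longrightarrow> Yi ** E = E ** Yi"
    if "Y ** Yi = mat 1" "Yi ** Y = mat 1" for Y Yi :: "'a^'m^'m"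
  proof -
    assume YE: "Y ** E = E ** Y"
    have "Yi ** E = Yi ** (E ** Y) ** Yi"
      using that by (simp add: matrix_mul_assoc[symmetric])
    also have "\<dots> = E ** Yi"
      using that by (simp add: YE[symmetric] matrix_mul_assoc)
    finally show ?thesis .
  qed
  show ?thesis
    using commute_inverse[OF K] commute_inverse[OF K(2,1)] by blast
qed

lemma colspace_mult_subset: "colspace (X ** Y) \<subseteq> colspace X"
  by (auto simp: colspace_def matrix_vector_mul_assoc[symmetric])

lemma mpinv_proj_mult_eq:
  assumes "colspace Y \<subseteq> colspace X"
  shows "X ** mpinv X ** Y = Y"
proof -
  have "(X ** mpinv X ** Y) *v v = Y *v v" for v
  proof -
    obtain y where y: "Y *v v = X *v y"
      using assms by (auto simp: colspace_def)
    have "(X ** mpinv X ** Y) *v v = (X ** mpinv X ** X) *v y"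
      by (simp add: matrix_vector_mul_assoc[symmetric] y)
    then show ?thesis
      by (simp add: mpinv_penrose(1) y)
  qed
  then show ?thesis
    by (simp add: matrix_eq)
qed

lemma hermitian_invariant_commute:
  fixes E K :: "complex^'m^'m"
  assumes "adj E = E" "adj K = K" "E ** K ** E = K ** E"
  shows "K ** E = E ** K"
proof -
  have "adj (E ** K ** E) = E ** K ** E"
    using assms(1,2) by (simp add: adj_mult matrix_mul_assoc)
  then have "K ** E = adj (E ** K ** E)"
    using assms(3) by simp
  also have "\<dots> = adj (K ** E)"
    using assms(3) by simp
  also have "\<dots> = E ** K"
    using assms(1,2) by (simp add: adj_mult)
  finally show ?thesis .
qed

lemma commute_mpinv_proj_iff_colspace:
  fixes X :: "complex^'n^'m" and K Ki :: "complex^'m^'m"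
  assumes K: "adj K = K" "K ** Ki = mat 1" "Ki ** K = mat 1"
  shows "K ** (X ** mpinv X) = X ** mpinv X ** K \<longleftrightarrow> colspace (K ** X) = colspace X"
proof
  assume KE: "K ** (X ** mpinv X) = X ** mpinv X ** K"
  have "K ** X = K ** (X ** mpinv X ** X)"
    by (simp only: mpinv_penrose(1))
  also have "\<dots> = K ** (X ** mpinv X) ** X"
    by (simp add: matrix_mul_assoc)
  also have "\<dots> = X ** (mpinv X ** K ** X)"
    unfolding KE by (simp add: matrix_mul_assoc)
  finally have sub: "colspace (K ** X) \<subseteq> colspace X"
    using colspace_mult_subset[of X] by simp
  have KiE: "Ki ** (X ** mpinv X) = X ** mpinv X ** Ki"
    using KE commute_inverse_iff[OF K(2,3)] by blast
  have "X = K ** (Ki ** (X ** mpinv X) ** X)"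
    using K by (simp add: matrix_mul_assoc mpinv_penrose(1))
  also have "\<dots> = K ** X ** (mpinv X ** Ki ** X)"
    unfolding KiE by (simp add: matrix_mul_assoc)
  finally have "colspace X = colspace (K ** X ** (mpinv X ** Ki ** X))"
    by (rule arg_cong)
  then show "colspace (K ** X) = colspace X"
    using sub colspace_mult_subset[of "K ** X"] by blast
next
  assume "colspace (K ** X) = colspace X"
  then have "X ** mpinv X ** (K ** X) = K ** X"
    by (simp add: mpinv_proj_mult_eq)
  then have "X ** mpinv X ** K ** (X ** mpinv X) = K ** (X ** mpinv X)"
    by (metis matrix_mul_assoc)
  then show "K ** (X ** mpinv X) = X ** mpinv X ** K"
    using hermitian_invariant_commute K(1) mpinv_penrose(3) by blast
qed

section \<open>The product \<open>ABC\<close>\<close>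

lemma matrix_inv_right: "invertible X \<Longrightarrow> X ** matrix_inv X = mat 1"
  and matrix_inv_left: "invertible X \<Longrightarrow> matrix_inv X ** X = mat 1"
  unfolding matrix_inv_def invertible_def by (metis (mono_tags, lifting) someI_ex)+

lemma invertible_matrix_inv: "invertible X \<Longrightarrow> invertible (matrix_inv X)"
  using matrix_inv_left matrix_inv_right invertible_def by blast

lemma matrix_inv_cancel_right:
  assumes "invertible R"
  shows "Z ** R ** matrix_inv R = Z" "Z ** matrix_inv R ** R = Z"
  using assms by (simp_all add: matrix_inv_right matrix_inv_left flip: matrix_mul_assoc)

lemmas matrix_inv_simps = matrix_inv_left matrix_inv_right matrix_inv_cancel_right matrix_mul_assoc

lemma similar_eq_iff:
  fixes S :: "'a::semiring_1^'m^'m" and R :: "'a^'n^'n" and X Y X' Y' :: "'a^'n^'m"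
  assumes "invertible S" "invertible R" "X = S ** X' ** R" "Y = S ** Y' ** R"
  shows "X = Y \<longleftrightarrow> X' = Y'"
proof
  assume "X = Y"
  then have "matrix_inv S ** X ** matrix_inv R = matrix_inv S ** Y ** matrix_inv R"
    by simp
  with assms show "X' = Y'"
    by (simp add: matrix_inv_simps)
qed (use assms in simp)

lemma mem_tset_iff:
  assumes "invertible A" "invertible C"
  shows "G \<in> tset A B C S \<longleftrightarrow> C ** G ** A \<in> ginv S B"
proof
  assume "G \<in> tset A B C S"
  then obtain N where "N \<in> ginv S B" "G = matrix_inv C ** N ** matrix_inv A"
    by (auto simp: tset_def)
  moreover have "C ** (matrix_inv C ** N ** matrix_inv A) ** A = N"
    using assms by (simp add: matrix_inv_simps)
  ultimately show "C ** G ** A \<in> ginv S B"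
    by simp
next
  assume "C ** G ** A \<in> ginv S B"
  moreover have "G = matrix_inv C ** (C ** G ** A) ** matrix_inv A"
    using assms by (simp add: matrix_inv_simps)
  ultimately show "G \<in> tset A B C S"
    unfolding tset_def by blast
qed

locale triple_product =
  fixes A :: "complex^'m^'m" and B :: "complex^'n^'m" and C :: "complex^'n^'n"
  assumes invertible_A: "invertible A" and invertible_C: "invertible C"
begin

definition M :: "complex^'n^'m" where "M = A ** B ** C"
definition P :: "complex^'m^'m" where "P = M ** mpinv M"
definition Q :: "complex^'n^'n" where "Q = mpinv M ** M"

definition P\<^sub>B :: "complex^'m^'m" where "P\<^sub>B = A ** (B ** mpinv B) ** matrix_inv A"
definition Q\<^sub>B :: "complex^'n^'n" where "Q\<^sub>B = matrix_inv C ** (mpinv B ** B) ** C"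

abbreviation H :: "(complex^'m^'n) set" where "H \<equiv> ginv {1,3,4} M"
abbreviation T :: "nat set \<Rightarrow> (complex^'m^'n) set" where "T S \<equiv> tset A B C S"

lemmas inv_simps =
  invertible_A invertible_C invertible_matrix_inv[OF invertible_A]
  invertible_matrix_inv[OF invertible_C] matrix_inv_simps

lemma mem_T:
  assumes "1 \<in> S"
  shows "G \<in> T S \<longleftrightarrow> M ** G ** M = M \<and> (2 \<in> S \<longrightarrow> G ** M ** G = G)
           \<and> (3 \<in> S \<longrightarrow> M ** G = P\<^sub>B) \<and> (4 \<in> S \<longrightarrow> G ** M = Q\<^sub>B)"
proof -
  let ?N = "C ** G ** A"
  have "B ** ?N ** B = B \<longleftrightarrow> M ** G ** M = M"
    by (rule similar_eq_iff[of "matrix_inv A" "matrix_inv C"]) (simp_all add: M_def inv_simps)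
  moreover have "?N ** B ** ?N = ?N \<longleftrightarrow> G ** M ** G = G"
    by (rule similar_eq_iff[of C A]) (simp_all add: M_def inv_simps)
  moreover have "B ** ?N = B ** mpinv B \<longleftrightarrow> M ** G = P\<^sub>B"
    by (rule similar_eq_iff[of "matrix_inv A" A]) (simp_all add: M_def P\<^sub>B_def inv_simps)
  moreover have "?N ** B = mpinv B ** B \<longleftrightarrow> G ** M = Q\<^sub>B"
    by (rule similar_eq_iff[of C "matrix_inv C"]) (simp_all add: M_def Q\<^sub>B_def inv_simps)
  ultimately show ?thesis
    by (simp add: mem_tset_iff[OF invertible_A invertible_C] mem_ginv_iff[OF assms])
qed

lemma mem_H: "G \<in> H \<longleftrightarrow> M ** G = P \<and> G ** M = Q"
  unfolding P_def Q_def by (rule ginv_134_iff)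

lemma P_mult_M: "P ** M = M"
  and M_mult_Q: "M ** Q = M"
  and mpinv_mult_P: "mpinv M ** P = mpinv M"
  and Q_mult_mpinv: "Q ** mpinv M = mpinv M"
  by (simp_all add: P_def Q_def matrix_mul_assoc mpinv_penrose(1,2))

lemma mpinv_in_H: "mpinv M \<in> H"
  unfolding mem_H by (simp add: P_def Q_def)

lemma mpinv_in_T_iff:
  assumes "1 \<in> S"
  shows "mpinv M \<in> T S \<longleftrightarrow> (3 \<in> S \<longrightarrow> P\<^sub>B = P) \<and> (4 \<in> S \<longrightarrow> Q\<^sub>B = Q)"
  using assms by (auto simp: mem_T mpinv_penrose(1,2) P_def Q_def)

lemma reverse_order_mpinv_in_T: "matrix_inv C ** mpinv B ** matrix_inv A \<in> T S"
proof -
  have "mpinv B \<in> ginv S B"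
    using mpinv_penrose[of B] by (simp add: ginv_def)
  then show ?thesis
    unfolding tset_def by blast
qed

lemma reverse_order_mpinv_props:
  "M ** (matrix_inv C ** mpinv B ** matrix_inv A) ** M = M"
  "M ** (matrix_inv C ** mpinv B ** matrix_inv A) = P\<^sub>B"
  "matrix_inv C ** mpinv B ** matrix_inv A ** M = Q\<^sub>B"
  using reverse_order_mpinv_in_T[of "{1,3,4}"] mem_T[of "{1,3,4}"] by blast+

lemma mult_P_if_ginv_1: "M ** G ** M = M \<Longrightarrow> M ** G ** P = P"
  by (simp add: P_def matrix_mul_assoc)

lemma Q_mult_if_ginv_1: "M ** G ** M = M \<Longrightarrow> Q ** (G ** M) = Q"
  by (simp add: Q_def matrix_mul_assoc[symmetric])

lemma M_eq_0_iff: "M = 0 \<longleftrightarrow> B = 0"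
  by (rule similar_eq_iff[of A C]) (simp_all add: M_def invertible_A invertible_C)

lemma P_eq_1_iff: "P = mat 1 \<longleftrightarrow> rank B = CARD('m)"
proof -
  have "(\<exists>R. M ** R = mat 1) \<longleftrightarrow> (\<exists>R. B ** R = mat 1)"
  proof
    assume "\<exists>R. M ** R = mat 1"
    then obtain R where "M ** R = mat 1" ..
    have "B ** (C ** R ** A) = matrix_inv A ** (M ** R) ** A"
      by (simp add: M_def inv_simps)
    also have "\<dots> = mat 1"
      using \<open>M ** R = mat 1\<close> by (simp add: inv_simps)
    finally show "\<exists>R. B ** R = mat 1" ..
  next
    assume "\<exists>R. B ** R = mat 1"
    then obtain R where "B ** R = mat 1" ..
    have "M ** (matrix_inv C ** R ** matrix_inv A) = A ** (B ** R) ** matrix_inv A"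
      by (simp add: M_def inv_simps)
    also have "\<dots> = mat 1"
      using \<open>B ** R = mat 1\<close> by (simp add: inv_simps)
    finally show "\<exists>R. M ** R = mat 1" ..
  qed
  then show ?thesis
    by (simp add: P_def mpinv_right_inverse_iff rank_eq_card_rows_iff)
qed

lemma Q_eq_1_iff: "Q = mat 1 \<longleftrightarrow> rank B = CARD('n)"
proof -
  have "(\<exists>L. L ** M = mat 1) \<longleftrightarrow> (\<exists>L. L ** B = mat 1)"
  proof
    assume "\<exists>L. L ** M = mat 1"
    then obtain L where "L ** M = mat 1" ..
    have "C ** L ** A ** B = C ** (L ** M) ** matrix_inv C"
      by (simp add: M_def inv_simps)
    also have "\<dots> = mat 1"
      using \<open>L ** M = mat 1\<close> by (simp add: inv_simps)
    finally show "\<exists>L. L ** B = mat 1" ..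
  next
    assume "\<exists>L. L ** B = mat 1"
    then obtain L where "L ** B = mat 1" ..
    have "matrix_inv C ** L ** matrix_inv A ** M = matrix_inv C ** (L ** B) ** C"
      by (simp add: M_def inv_simps)
    also have "\<dots> = mat 1"
      using \<open>L ** B = mat 1\<close> by (simp add: inv_simps)
    finally show "\<exists>L. L ** M = mat 1" ..
  qed
  then show ?thesis
    by (simp add: Q_def mpinv_left_inverse_iff rank_eq_card_cols_iff)
qed

lemma PB_eq_P_iff_hermitian: "P\<^sub>B = P \<longleftrightarrow> adj P\<^sub>B = P\<^sub>B"
proof -
  let ?G = "matrix_inv C ** mpinv B ** matrix_inv A"
  note G = reverse_order_mpinv_props(1,2)
  have "P\<^sub>B = P \<longleftrightarrow> ?G \<in> ginv {1,3} M"
    using G(2) ginv_13_iff[of ?G M] by (simp add: P_def)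
  also have "\<dots> \<longleftrightarrow> adj P\<^sub>B = P\<^sub>B"
    using G by (simp add: ginv_def)
  finally show ?thesis .
qed

lemma QB_eq_Q_iff_hermitian: "Q\<^sub>B = Q \<longleftrightarrow> adj Q\<^sub>B = Q\<^sub>B"
proof -
  let ?G = "matrix_inv C ** mpinv B ** matrix_inv A"
  note G = reverse_order_mpinv_props(1,3)
  have "Q\<^sub>B = Q \<longleftrightarrow> ?G \<in> ginv {1,4} M"
    using G(2) ginv_14_iff[of ?G M] by (simp add: Q_def)
  also have "\<dots> \<longleftrightarrow> adj Q\<^sub>B = Q\<^sub>B"
    using G by (simp add: ginv_def)
  finally show ?thesis .
qed

lemma adj_inverse_simps:
  "adj A ** adj (matrix_inv A) = mat 1" "adj (matrix_inv A) ** adj A = mat 1"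
  "adj C ** adj (matrix_inv C) = mat 1" "adj (matrix_inv C) ** adj C = mat 1"
  "Z ** adj A ** adj (matrix_inv A) = Z" "Z ** adj (matrix_inv A) ** adj A = Z"
  "Z' ** adj C ** adj (matrix_inv C) = Z'" "Z' ** adj (matrix_inv C) ** adj C = Z'"
  using invertible_A invertible_C
  by (simp_all add: matrix_inv_left matrix_inv_right flip: adj_mult matrix_mul_assoc)

lemma PB_eq_P_iff: "P\<^sub>B = P \<longleftrightarrow> colspace (adj A ** A ** B) = colspace B"
proof -
  have "P\<^sub>B = P \<longleftrightarrow> adj A ** A ** (B ** mpinv B) = B ** mpinv B ** (adj A ** A)"
    unfolding PB_eq_P_iff_hermitian unfolding P\<^sub>B_def
    by (rule adj_similar_eq_iff_commute) (simp_all add: inv_simps mpinv_penrose(3))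
  also have "\<dots> \<longleftrightarrow> colspace (adj A ** A ** B) = colspace B"
    by (rule commute_mpinv_proj_iff_colspace[where Ki = "matrix_inv A ** adj (matrix_inv A)"])
      (simp_all add: adj_mult inv_simps adj_inverse_simps)
  finally show ?thesis .
qed

lemma QB_eq_Q_iff: "Q\<^sub>B = Q \<longleftrightarrow> colspace (C ** adj C ** adj B) = colspace (adj B)"
proof -
  have F: "mpinv B ** B = adj B ** mpinv (adj B)"
    by (simp add: mpinv_adj mpinv_penrose(4) flip: adj_mult)
  have "Q\<^sub>B = Q \<longleftrightarrow>
      adj (matrix_inv C) ** matrix_inv C ** (mpinv B ** B)
        = mpinv B ** B ** (adj (matrix_inv C) ** matrix_inv C)"
    unfolding QB_eq_Q_iff_hermitian unfolding Q\<^sub>B_def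
    by (rule adj_similar_eq_iff_commute) (simp_all add: inv_simps mpinv_penrose(4))
  also have "\<dots> \<longleftrightarrow> C ** adj C ** (mpinv B ** B) = mpinv B ** B ** (C ** adj C)"
    by (rule commute_inverse_iff[symmetric])
      (simp_all add: adj_mult inv_simps adj_inverse_simps)
  also have "\<dots> \<longleftrightarrow> colspace (C ** adj C ** adj B) = colspace (adj B)"
    unfolding F
    by (rule commute_mpinv_proj_iff_colspace[where Ki = "adj (matrix_inv C) ** matrix_inv C"])
      (simp_all add: adj_mult inv_simps adj_inverse_simps)
  finally show ?thesis .
qed

lemma M_mult_complement_Q: "M ** (mat 1 - Q) = 0"
  and complement_P_mult_M: "(mat 1 - P) ** M = 0"
  and P_idem: "P ** P = P"
  and Q_idem: "Q ** Q = Q"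
  by (simp_all add: matrix_diff_ldistrib matrix_diff_rdistrib M_mult_Q P_mult_M)
    (simp_all add: P_def Q_def matrix_mul_assoc mpinv_penrose(1,2))

lemma left_perturbation:
  fixes W :: "complex^'m^'n"
  defines "G \<equiv> mpinv M + (mat 1 - Q) ** W ** P"
  shows "M ** G = P" "G ** M = Q + (mat 1 - Q) ** W ** M" "M ** G ** M = M" "G ** M ** G = G"
proof -
  show MG: "M ** G = P"
    by (simp add: G_def matrix_add_ldistrib matrix_mul_assoc M_mult_complement_Q P_def)
  then show "M ** G ** M = M"
    by (simp add: P_mult_M)
  show "G ** M = Q + (mat 1 - Q) ** W ** M"
    by (simp add: G_def matrix_add_rdistrib P_mult_M Q_def flip: matrix_mul_assoc)
  have "G ** M ** G = G ** P"
    by (simp add: MG flip: matrix_mul_assoc)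
  also have "\<dots> = G"
    by (simp add: G_def matrix_add_rdistrib mpinv_mult_P P_idem flip: matrix_mul_assoc)
  finally show "G ** M ** G = G" .
qed

lemma right_perturbation:
  fixes W :: "complex^'m^'n"
  defines "G \<equiv> mpinv M + Q ** W ** (mat 1 - P)"
  shows "G ** M = Q" "M ** G = P + M ** W ** (mat 1 - P)" "M ** G ** M = M" "G ** M ** G = G"
proof -
  show GM: "G ** M = Q"
    by (simp add: G_def matrix_add_rdistrib complement_P_mult_M Q_def flip: matrix_mul_assoc)
  then show "M ** G ** M = M"
    by (simp add: M_mult_Q flip: matrix_mul_assoc)
  show "M ** G = P + M ** W ** (mat 1 - P)"
    by (simp add: G_def matrix_add_ldistrib matrix_mul_assoc M_mult_Q P_def)
  have "G ** M ** G = Q ** G"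
    by (simp add: GM)
  also have "\<dots> = G"
    by (simp add: G_def matrix_add_ldistrib Q_mult_mpinv matrix_mul_assoc Q_idem)
  finally show "G ** M ** G = G" .
qed

lemma two_sided_perturbation_in_H: "mpinv M + (mat 1 - Q) ** W ** (mat 1 - P) \<in> H"
proof -
  have "M ** ((mat 1 - Q) ** W ** (mat 1 - P)) = 0"
    by (simp add: matrix_mul_assoc M_mult_complement_Q)
  moreover have "(mat 1 - Q) ** W ** (mat 1 - P) ** M = 0"
    by (simp add: complement_P_mult_M flip: matrix_mul_assoc)
  ultimately show ?thesis
    unfolding mem_H by (simp add: matrix_add_ldistrib matrix_add_rdistrib P_def Q_def)
qed

lemma ginv_134_mult_M_mult:
  assumes "G \<in> H"
  shows "G ** M ** G = mpinv M"
proof -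
  have MG: "M ** G = P" and GM: "G ** M = Q"
    using assms unfolding mem_H by auto
  have "G ** M ** G = G ** M ** mpinv M"
    by (simp add: MG P_def flip: matrix_mul_assoc)
  then show ?thesis
    by (simp add: GM Q_mult_mpinv)
qed

lemma Q_eq_1_if_left_perturbations_in_H:
  assumes "M \<noteq> 0" "\<And>W. mpinv M + (mat 1 - Q) ** W ** P \<in> H"
  shows "Q = mat 1"
proof -
  have "(mat 1 - Q) ** W ** M = 0" for W
    using assms(2)[of W] left_perturbation(2)[of W] unfolding mem_H by simp
  then have "mat 1 - Q = 0 \<or> M = 0"
    by (rule all_products_eq_0)
  with assms(1) show ?thesis
    by simp
qed

lemma P_eq_1_if_right_perturbations_in_H:
  assumes "M \<noteq> 0" "\<And>W. mpinv M + Q ** W ** (mat 1 - P) \<in> H"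
  shows "P = mat 1"
proof -
  have "M ** W ** (mat 1 - P) = 0" for W
    using assms(2)[of W] right_perturbation(2)[of W] unfolding mem_H by simp
  then have "M = 0 \<or> mat 1 - P = 0"
    by (rule all_products_eq_0)
  with assms(1) show ?thesis
    by simp
qed

lemma left_perturbation_in_T:
  assumes "1 \<in> S" "4 \<notin> S" "3 \<in> S \<longrightarrow> P\<^sub>B = P"
  shows "mpinv M + (mat 1 - Q) ** W ** P \<in> T S"
  unfolding mem_T[OF assms(1)] using assms(2,3) left_perturbation(1,3,4)[of W] by auto

lemma right_perturbation_in_T:
  assumes "1 \<in> S" "3 \<notin> S" "4 \<in> S \<longrightarrow> Q\<^sub>B = Q"
  shows "mpinv M + Q ** W ** (mat 1 - P) \<in> T S"
  unfolding mem_T[OF assms(1)] using assms(2,3) right_perturbation(1,3,4)[of W] by auto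

lemma PB_eq_P_if_P_eq_1: "P = mat 1 \<Longrightarrow> P\<^sub>B = P"
  using mult_P_if_ginv_1[OF reverse_order_mpinv_props(1)] reverse_order_mpinv_props(2) by simp

lemma QB_eq_Q_if_Q_eq_1: "Q = mat 1 \<Longrightarrow> Q\<^sub>B = Q"
  using Q_mult_if_ginv_1[OF reverse_order_mpinv_props(1)] reverse_order_mpinv_props(3) by simp

lemma M_eq_0_consequences:
  assumes "M = 0"
  shows "P\<^sub>B = P" "Q\<^sub>B = Q" "P \<noteq> mat 1" "Q \<noteq> mat 1"
proof -
  have "B = 0"
    using assms M_eq_0_iff by blast
  then have "P\<^sub>B = 0" "Q\<^sub>B = 0"
    unfolding P\<^sub>B_def Q\<^sub>B_def by simp_all
  moreover have "P = 0" "Q = 0"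
    using assms by (simp_all add: P_def Q_def)
  ultimately show "P\<^sub>B = P" "Q\<^sub>B = Q" "P \<noteq> mat 1" "Q \<noteq> mat 1"
    using mat_1_neq_0 by simp_all
qed

lemma H_inter_T_iff:
  assumes "1 \<in> S"
  shows "H \<inter> T S \<noteq> {} \<longleftrightarrow> (3 \<in> S \<longrightarrow> P\<^sub>B = P) \<and> (4 \<in> S \<longrightarrow> Q\<^sub>B = Q)"
proof
  assume "H \<inter> T S \<noteq> {}"
  then obtain G where "G \<in> H" "G \<in> T S"
    by blast
  then show "(3 \<in> S \<longrightarrow> P\<^sub>B = P) \<and> (4 \<in> S \<longrightarrow> Q\<^sub>B = Q)"
    unfolding mem_H mem_T[OF assms] by auto
next
  assume "(3 \<in> S \<longrightarrow> P\<^sub>B = P) \<and> (4 \<in> S \<longrightarrow> Q\<^sub>B = Q)"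
  then have "mpinv M \<in> H \<inter> T S"
    using mpinv_in_H mpinv_in_T_iff[OF assms] by blast
  then show "H \<inter> T S \<noteq> {}"
    by blast
qed

lemma ginv_134_all_reflexive_iff: "(\<forall>G\<in>H. G ** M ** G = G) \<longleftrightarrow> P = mat 1 \<or> Q = mat 1"
proof
  assume reflexive: "\<forall>G\<in>H. G ** M ** G = G"
  have "(mat 1 - Q) ** W ** (mat 1 - P) = 0" for W
  proof -
    let ?G = "mpinv M + (mat 1 - Q) ** W ** (mat 1 - P)"
    have "?G ** M ** ?G = ?G"
      using reflexive two_sided_perturbation_in_H by blast
    then show ?thesis
      using ginv_134_mult_M_mult[OF two_sided_perturbation_in_H] by simp
  qed
  then have "mat 1 - Q = 0 \<or> mat 1 - P = 0"
    by (rule all_products_eq_0)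
  then show "P = mat 1 \<or> Q = mat 1"
    by auto
next
  assume P_or_Q: "P = mat 1 \<or> Q = mat 1"
  show "\<forall>G\<in>H. G ** M ** G = G"
  proof
    fix G
    assume "G \<in> H"
    then have MG: "M ** G = P" and GM: "G ** M = Q"
      unfolding mem_H by auto
    from P_or_Q show "G ** M ** G = G"
    proof
      assume "P = mat 1"
      then show ?thesis
        using MG by (simp flip: matrix_mul_assoc)
    next
      assume "Q = mat 1"
      then show ?thesis
        using GM by simp
    qed
  qed
qed

lemma H_subset_T_iff:
  assumes "1 \<in> S"
  shows "H \<subseteq> T S \<longleftrightarrow> (2 \<in> S \<longrightarrow> P = mat 1 \<or> Q = mat 1)
           \<and> (3 \<in> S \<longrightarrow> P\<^sub>B = P) \<and> (4 \<in> S \<longrightarrow> Q\<^sub>B = Q)"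
proof
  assume sub: "H \<subseteq> T S"
  then have "2 \<in> S \<longrightarrow> (\<forall>G\<in>H. G ** M ** G = G)"
    unfolding subset_iff mem_T[OF assms] by blast
  then show "(2 \<in> S \<longrightarrow> P = mat 1 \<or> Q = mat 1) \<and> (3 \<in> S \<longrightarrow> P\<^sub>B = P) \<and> (4 \<in> S \<longrightarrow> Q\<^sub>B = Q)"
    using ginv_134_all_reflexive_iff sub mpinv_in_H mpinv_in_T_iff[OF assms] by blast
next
  assume conds: "(2 \<in> S \<longrightarrow> P = mat 1 \<or> Q = mat 1) \<and> (3 \<in> S \<longrightarrow> P\<^sub>B = P) \<and> (4 \<in> S \<longrightarrow> Q\<^sub>B = Q)"
  show "H \<subseteq> T S"
  proof
    fix G
    assume G: "G \<in> H"
    then have "M ** G = P" "G ** M = Q"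
      unfolding mem_H by auto
    moreover have "2 \<in> S \<longrightarrow> G ** M ** G = G"
      using conds G ginv_134_all_reflexive_iff by blast
    ultimately show "G \<in> T S"
      using conds unfolding mem_T[OF assms] by (auto simp: P_mult_M)
  qed
qed

lemma T_subset_H_iff:
  assumes "1 \<in> S"
  shows "T S \<subseteq> H \<longleftrightarrow> P\<^sub>B = P \<and> Q\<^sub>B = Q
           \<and> (M = 0 \<or> (3 \<in> S \<or> P = mat 1) \<and> (4 \<in> S \<or> Q = mat 1))"
proof
  assume sub: "T S \<subseteq> H"
  then have "matrix_inv C ** mpinv B ** matrix_inv A \<in> H"
    using reverse_order_mpinv_in_T by blast
  then have PB: "P\<^sub>B = P" and QB: "Q\<^sub>B = Q"
    using reverse_order_mpinv_props unfolding mem_H by auto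
  have "P = mat 1" if "M \<noteq> 0" "3 \<notin> S"
    using that(1) P_eq_1_if_right_perturbations_in_H right_perturbation_in_T assms that(2) QB sub
    by blast
  moreover have "Q = mat 1" if "M \<noteq> 0" "4 \<notin> S"
    using that(1) Q_eq_1_if_left_perturbations_in_H left_perturbation_in_T assms that(2) PB sub
    by blast
  ultimately show "P\<^sub>B = P \<and> Q\<^sub>B = Q \<and> (M = 0 \<or> (3 \<in> S \<or> P = mat 1) \<and> (4 \<in> S \<or> Q = mat 1))"
    using PB QB by blast
next
  assume conds: "P\<^sub>B = P \<and> Q\<^sub>B = Q \<and> (M = 0 \<or> (3 \<in> S \<or> P = mat 1) \<and> (4 \<in> S \<or> Q = mat 1))"
  show "T S \<subseteq> H"
  proof
    fix G
    assume "G \<in> T S"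
    then have G: "M ** G ** M = M" "3 \<in> S \<longrightarrow> M ** G = P\<^sub>B" "4 \<in> S \<longrightarrow> G ** M = Q\<^sub>B"
      unfolding mem_T[OF assms] by auto
    have "M ** G = P \<and> G ** M = Q"
      using conds G mult_P_if_ginv_1[OF G(1)] Q_mult_if_ginv_1[OF G(1)]
      by (cases "M = 0") (auto simp: P_def Q_def)
    then show "G \<in> H"
      unfolding mem_H .
  qed
qed

lemma rank_eq_min_iff: "rank B = min CARD('m) CARD('n) \<longleftrightarrow> P = mat 1 \<or> Q = mat 1"
  using P_eq_1_iff Q_eq_1_iff rank_le_card_rows[of B] rank_le_card_cols[of B]
  by (auto simp: min_def)

text \<open>Stated in the form that remains after \<open>P_eq_1_iff\<close> has rewritten \<open>rank B = CARD('m)\<close>.\<close>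

lemma P_eq_1_square_iff: "P = mat 1 \<and> CARD('m) = CARD('n) \<longleftrightarrow> P = mat 1 \<and> Q = mat 1"
  using P_eq_1_iff Q_eq_1_iff by auto

lemmas paper_conditions_iff =
  M_eq_0_iff[symmetric] rank_eq_min_iff P_eq_1_iff[symmetric] Q_eq_1_iff[symmetric]
  P_eq_1_square_iff PB_eq_P_iff[symmetric] QB_eq_Q_iff[symmetric]

lemmas inclusion_iffs =
  set_eq_subset H_subset_T_iff[OF insertI1] T_subset_H_iff[OF insertI1]

lemmas degenerate_cases = PB_eq_P_if_P_eq_1 QB_eq_Q_if_Q_eq_1 M_eq_0_consequences

text \<open>The paper's conditions are rewritten in a first pass, since \<open>set_eq_subset\<close> would
  otherwise also split the column-space equations and the emptiness tests.\<close>

lemma ginv134_vs_tset_1: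
  "H \<subseteq> T {1} \<and> (T {1} \<subseteq> H \<longleftrightarrow> H = T {1})
    \<and> (H = T {1} \<longleftrightarrow> B = 0 \<or> (rank B = CARD('m) \<and> CARD('m) = CARD('n)))"
  unfolding paper_conditions_iff H_inter_T_iff[OF insertI1] unfolding inclusion_iffs
  using degenerate_cases by auto

lemma ginv134_vs_tset_12:
  "H \<inter> T {1,2} \<noteq> {}
    \<and> (T {1,2} \<subseteq> H \<longleftrightarrow> B = 0 \<or> (rank B = CARD('m) \<and> CARD('m) = CARD('n)))
    \<and> (H \<subseteq> T {1,2} \<longleftrightarrow> rank B = CARD('m) \<or> rank B = CARD('n))
    \<and> (H = T {1,2} \<longleftrightarrow> rank B = CARD('m) \<and> CARD('m) = CARD('n))"
  unfolding paper_conditions_iff H_inter_T_iff[OF insertI1] unfolding inclusion_iffs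
  using degenerate_cases by auto

lemma ginv134_vs_tset_13:
  "(H \<inter> T {1,3} \<noteq> {} \<longleftrightarrow> H \<subseteq> T {1,3})
    \<and> (H \<subseteq> T {1,3} \<longleftrightarrow> colspace (adj A ** A ** B) = colspace B)
    \<and> (T {1,3} \<subseteq> H \<longleftrightarrow> H = T {1,3})
    \<and> (H = T {1,3} \<longleftrightarrow> B = 0 \<or> (rank B = CARD('n) \<and> colspace (adj A ** A ** B) = colspace B))"
  unfolding paper_conditions_iff H_inter_T_iff[OF insertI1] unfolding inclusion_iffs
  using degenerate_cases by auto

lemma ginv134_vs_tset_14:
  "(H \<inter> T {1,4} \<noteq> {} \<longleftrightarrow> H \<subseteq> T {1,4})
    \<and> (H \<subseteq> T {1,4} \<longleftrightarrow> colspace (C ** adj C ** adj B) = colspace (adj B))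
    \<and> (T {1,4} \<subseteq> H \<longleftrightarrow> H = T {1,4})
    \<and> (H = T {1,4} \<longleftrightarrow>
        B = 0 \<or> (rank B = CARD('m) \<and> colspace (C ** adj C ** adj B) = colspace (adj B)))"
  unfolding paper_conditions_iff H_inter_T_iff[OF insertI1] unfolding inclusion_iffs
  using degenerate_cases by auto

lemma ginv134_vs_tset_123:
  "(H \<inter> T {1,2,3} \<noteq> {} \<longleftrightarrow> colspace (adj A ** A ** B) = colspace B)
    \<and> (T {1,2,3} \<subseteq> H \<longleftrightarrow>
        B = 0 \<or> (rank B = CARD('n) \<and> colspace (adj A ** A ** B) = colspace B))
    \<and> (H \<subseteq> T {1,2,3} \<longleftrightarrow>
        colspace (adj A ** A ** B) = colspace B \<and> rank B = min CARD('m) CARD('n))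
    \<and> (H = T {1,2,3} \<longleftrightarrow> rank B = CARD('n) \<and> colspace (adj A ** A ** B) = colspace B)"
  unfolding paper_conditions_iff H_inter_T_iff[OF insertI1] unfolding inclusion_iffs
  using degenerate_cases by auto

lemma ginv134_vs_tset_124:
  "(H \<inter> T {1,2,4} \<noteq> {} \<longleftrightarrow> colspace (C ** adj C ** adj B) = colspace (adj B))
    \<and> (T {1,2,4} \<subseteq> H \<longleftrightarrow>
        B = 0 \<or> (rank B = CARD('m) \<and> colspace (C ** adj C ** adj B) = colspace (adj B)))
    \<and> (H \<subseteq> T {1,2,4} \<longleftrightarrow>
        colspace (C ** adj C ** adj B) = colspace (adj B) \<and> rank B = min CARD('m) CARD('n))
    \<and> (H = T {1,2,4} \<longleftrightarrow>
        rank B = CARD('m) \<and> colspace (C ** adj C ** adj B) = colspace (adj B))"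
  unfolding paper_conditions_iff H_inter_T_iff[OF insertI1] unfolding inclusion_iffs
  using degenerate_cases by auto

lemma ginv134_vs_tset_134:
  "(H \<inter> T {1,3,4} \<noteq> {} \<longleftrightarrow> H = T {1,3,4})
    \<and> (H = T {1,3,4} \<longleftrightarrow>
        colspace (adj A ** A ** B) = colspace B \<and> colspace (C ** adj C ** adj B) = colspace (adj B))"
  unfolding paper_conditions_iff H_inter_T_iff[OF insertI1] unfolding inclusion_iffs
  using degenerate_cases by auto

lemma reverse_order_mpinv_in_ginv134_iff:
  "matrix_inv C ** mpinv B ** matrix_inv A \<in> H \<longleftrightarrow>
    colspace (adj A ** A ** B) = colspace B \<and> colspace (C ** adj C ** adj B) = colspace (adj B)"
  unfolding paper_conditions_iff mem_H reverse_order_mpinv_props by auto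

end

theorem theorem4p2:
  fixes A :: "complex^'m^'m" and B :: "complex^'n^'m" and C :: "complex^'n^'n"
  assumes "invertible A" and "invertible C"
  shows
  "(ginv {1,3,4} (A ** B ** C) \<subseteq> tset A B C {1}
    \<and> (ginv {1,3,4} (A ** B ** C) \<supseteq> tset A B C {1} \<longleftrightarrow> ginv {1,3,4} (A ** B ** C) = tset A B C {1})
    \<and> (ginv {1,3,4} (A ** B ** C) = tset A B C {1} \<longleftrightarrow> B = 0 \<or> (rank B = CARD('m) \<and> CARD('m) = CARD('n))))
 \<and> (ginv {1,3,4} (A ** B ** C) \<inter> tset A B C {1,2} \<noteq> {}
    \<and> (ginv {1,3,4} (A ** B ** C) \<supseteq> tset A B C {1,2} \<longleftrightarrow> B = 0 \<or> (rank B = CARD('m) \<and> CARD('m) = CARD('n)))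
    \<and> (ginv {1,3,4} (A ** B ** C) \<subseteq> tset A B C {1,2} \<longleftrightarrow> rank B = CARD('m) \<or> rank B = CARD('n))
    \<and> (ginv {1,3,4} (A ** B ** C) = tset A B C {1,2} \<longleftrightarrow> rank B = CARD('m) \<and> CARD('m) = CARD('n)))
 \<and> ((ginv {1,3,4} (A ** B ** C) \<inter> tset A B C {1,3} \<noteq> {} \<longleftrightarrow> ginv {1,3,4} (A ** B ** C) \<subseteq> tset A B C {1,3})
    \<and> (ginv {1,3,4} (A ** B ** C) \<subseteq> tset A B C {1,3} \<longleftrightarrow> colspace (adj A ** A ** B) = colspace B)
    \<and> (ginv {1,3,4} (A ** B ** C) \<supseteq> tset A B C {1,3} \<longleftrightarrow> ginv {1,3,4} (A ** B ** C) = tset A B C {1,3})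
    \<and> (ginv {1,3,4} (A ** B ** C) = tset A B C {1,3} \<longleftrightarrow>
         B = 0 \<or> (rank B = CARD('n) \<and> colspace (adj A ** A ** B) = colspace B)))
 \<and> ((ginv {1,3,4} (A ** B ** C) \<inter> tset A B C {1,4} \<noteq> {} \<longleftrightarrow> ginv {1,3,4} (A ** B ** C) \<subseteq> tset A B C {1,4})
    \<and> (ginv {1,3,4} (A ** B ** C) \<subseteq> tset A B C {1,4} \<longleftrightarrow> colspace (C ** adj C ** adj B) = colspace (adj B))
    \<and> (ginv {1,3,4} (A ** B ** C) \<supseteq> tset A B C {1,4} \<longleftrightarrow> ginv {1,3,4} (A ** B ** C) = tset A B C {1,4})
    \<and> (ginv {1,3,4} (A ** B ** C) = tset A B C {1,4} \<longleftrightarrow>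
         B = 0 \<or> (rank B = CARD('m) \<and> colspace (C ** adj C ** adj B) = colspace (adj B))))
 \<and> ((ginv {1,3,4} (A ** B ** C) \<inter> tset A B C {1,2,3} \<noteq> {} \<longleftrightarrow> colspace (adj A ** A ** B) = colspace B)
    \<and> (ginv {1,3,4} (A ** B ** C) \<supseteq> tset A B C {1,2,3} \<longleftrightarrow>
         B = 0 \<or> (rank B = CARD('n) \<and> colspace (adj A ** A ** B) = colspace B))
    \<and> (ginv {1,3,4} (A ** B ** C) \<subseteq> tset A B C {1,2,3} \<longleftrightarrow>
         colspace (adj A ** A ** B) = colspace B \<and> rank B = min CARD('m) CARD('n))
    \<and> (ginv {1,3,4} (A ** B ** C) = tset A B C {1,2,3} \<longleftrightarrow>
         rank B = CARD('n) \<and> colspace (adj A ** A ** B) = colspace B))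
 \<and> ((ginv {1,3,4} (A ** B ** C) \<inter> tset A B C {1,2,4} \<noteq> {} \<longleftrightarrow> colspace (C ** adj C ** adj B) = colspace (adj B))
    \<and> (ginv {1,3,4} (A ** B ** C) \<supseteq> tset A B C {1,2,4} \<longleftrightarrow>
         B = 0 \<or> (rank B = CARD('m) \<and> colspace (C ** adj C ** adj B) = colspace (adj B)))
    \<and> (ginv {1,3,4} (A ** B ** C) \<subseteq> tset A B C {1,2,4} \<longleftrightarrow>
         colspace (C ** adj C ** adj B) = colspace (adj B) \<and> rank B = min CARD('m) CARD('n))
    \<and> (ginv {1,3,4} (A ** B ** C) = tset A B C {1,2,4} \<longleftrightarrow>
         rank B = CARD('m) \<and> colspace (C ** adj C ** adj B) = colspace (adj B)))
 \<and> ((ginv {1,3,4} (A ** B ** C) \<inter> tset A B C {1,3,4} \<noteq> {} \<longleftrightarrow> ginv {1,3,4} (A ** B ** C) = tset A B C {1,3,4})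
    \<and> (ginv {1,3,4} (A ** B ** C) = tset A B C {1,3,4} \<longleftrightarrow>
         colspace (adj A ** A ** B) = colspace B \<and> colspace (C ** adj C ** adj B) = colspace (adj B)))
 \<and> (matrix_inv C ** mpinv B ** matrix_inv A \<in> ginv {1,3,4} (A ** B ** C) \<longleftrightarrow>
         colspace (adj A ** A ** B) = colspace B \<and> colspace (C ** adj C ** adj B) = colspace (adj B))"
proof -
  interpret triple_product A B C
    using assms by unfold_locales
  show ?thesis
    using ginv134_vs_tset_1 ginv134_vs_tset_12 ginv134_vs_tset_13 ginv134_vs_tset_14
      ginv134_vs_tset_123 ginv134_vs_tset_124 ginv134_vs_tset_134 reverse_order_mpinv_in_ginv134_iff
    unfolding M_def by blast
qed

end
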